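(* Let $p$ be a prime and $\mathcal H$ a finite relational structure. If $\mathcal H$ is congruence $p$-permutable, then $\mathcal H$ is strongly $p$-rectangular.
   Context: $\langle\mathcal H\rangle_p$ denotes the set of relations $p$-mpp-definable in $\mathcal H$, i.e. definable by formulas $\exists^{\equiv p}\mathbf y_1\cdots\exists^{\equiv p}\mathbf y_s\,\Phi$ with $\Phi$ a conjunction of atomic formulas over relations of $\mathcal H$ and equality, where $\exists^{\equiv p}\mathbf y\,\Psi(\mathbf x,\mathbf y)$ holds for $\mathbf a$ iff the number of $\mathbf b$ with $\Psi(\mathbf a,\mathbf b)$ is not divisible by $p$. For $\mathcal S\in\langle\mathcal H\rangle_p$ ($k$-ary), a $p$-congruence of $\mathcal S$ is a $2k$-ary relation in $\langle\mathcal H\rangle_p$ that is an equivalence relation on $\mathcal S$. For binary relations $\alpha,\beta$, $(\mathbf a,\mathbf b)\in\alpha\circ_p\beta$ iff the number of $\mathbf c$ with $(\mathbf a,\mathbf c)\in\alpha$ and $(\mathbf c,\mathbf b)\in\beta$ is not divisible by $p$. $\mathcal H$ is congruence $p$-permutable if $\alpha\circ_p\beta=\beta\circ_p\alpha$ for all $p$-congruences $\alpha,\beta$ of every $\mathcal S\in\langle\mathcal H\rangle_p$. A relation $\mathcal R$ of arity $n\ge2$ is rectangular if for every nonempty $I\subsetneq[n]$, whenever $(\mathbf a,\mathbf c),(\mathbf a,\mathbf d),(\mathbf b,\mathbf c)\in\mathcal R$ (with $\mathbf a,\mathbf b$ on coordinates $I$, $\mathbf c,\mathbf d$ on $[n]\setminus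 I$) also $(\mathbf b,\mathbf d)\in\mathcal R$. $\mathcal H$ is strongly $p$-rectangular if every relation of arity at least 2 in $\langle\mathcal H\rangle_p$ is rectangular. *)

theory Defs
  imports Main "HOL-Computational_Algebra.Primes"
begin

text \<open>A finite relational structure on the finite type 'a is a finite set H of
  pairs (n, R) where R is an n-ary relation, represented as a set of lists of length n.\<close>

datatype 'a atom = RelA nat "'a list set" "nat list" | EqA nat nat

fun atom_vars :: "'a atom \<Rightarrow> nat list" where
  "atom_vars (RelA n R vs) = vs"
| "atom_vars (EqA u v) = [u, v]"

fun wf_atom :: "(nat \<times> 'a list set) set \<Rightarrow> 'a atom \<Rightarrow> bool" where
  "wf_atom H (RelA n R vs) = ((n, R) \<in> H \<and> length vs = n)"
| "wf_atom H (EqA u v) = True"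

fun holds :: "(nat \<Rightarrow> 'a) \<Rightarrow> 'a atom \<Rightarrow> bool" where
  "holds \<sigma> (RelA n R vs) = (map \<sigma> vs \<in> R)"
| "holds \<sigma> (EqA u v) = (\<sigma> u = \<sigma> v)"

definition upd :: "(nat \<Rightarrow> 'a) \<Rightarrow> nat list \<Rightarrow> 'a list \<Rightarrow> nat \<Rightarrow> 'a" where
  "upd \<sigma> vs bs = fold (\<lambda>(v, b) f. f(v := b)) (zip vs bs) \<sigma>"

text \<open>Semantics of  exists^{=p} ys_1 ... exists^{=p} ys_s. (conjunction of atoms Phi).\<close>
fun sat :: "nat \<Rightarrow> 'a atom list \<Rightarrow> nat list list \<Rightarrow> (nat \<Rightarrow> 'a) \<Rightarrow> bool" where
  "sat p \<Phi> [] \<sigma> = (\<forall>at\<in>set \<Phi>. holds \<sigma> at)"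
| "sat p \<Phi> (ys # Ys) \<sigma> =
     (\<not> p dvd card {b :: 'a list. length b = length ys \<and> sat p \<Phi> Ys (upd \<sigma> ys b)})"

definition mpp_def :: "nat \<Rightarrow> (nat \<times> 'a list set) set \<Rightarrow> nat \<Rightarrow> 'a list set \<Rightarrow> bool" where
  "mpp_def p H k R \<longleftrightarrow>
     (\<exists>xs Ys \<Phi>. length xs = k \<and> distinct (xs @ concat Ys) \<and>
        (\<forall>at\<in>set \<Phi>. wf_atom H at \<and> set (atom_vars at) \<subseteq> set (xs @ concat Ys)) \<and>
        R = {a. length a = k \<and> sat p \<Phi> Ys (upd (\<lambda>_. undefined) xs a)})"

definition pairs :: "nat \<Rightarrow> 'a list set \<Rightarrow> ('a list \<times> 'a list) set" where
  "pairs k \<alpha> = {(a, b). length a = k \<and> length b = k \<and> a @ b \<in> \<alpha>}"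

definition p_congruence ::
  "nat \<Rightarrow> (nat \<times> 'a list set) set \<Rightarrow> nat \<Rightarrow> 'a list set \<Rightarrow> 'a list set \<Rightarrow> bool" where
  "p_congruence p H k S \<alpha> \<longleftrightarrow> mpp_def p H (2 * k) \<alpha> \<and> equiv S (pairs k \<alpha>)"

definition pcomp :: "nat \<Rightarrow> nat \<Rightarrow> ('a list \<times> 'a list) set \<Rightarrow> ('a list \<times> 'a list) set
    \<Rightarrow> ('a list \<times> 'a list) set" where
  "pcomp p k \<alpha> \<beta> = {(a, b). length a = k \<and> length b = k \<and>
      \<not> p dvd card {c :: 'a list. length c = k \<and> (a, c) \<in> \<alpha> \<and> (c, b) \<in> \<beta>}}"

definition cong_p_permutable :: "nat \<Rightarrow> (nat \<times> 'a list set) set \<Rightarrow> bool" where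
  "cong_p_permutable p H \<longleftrightarrow>
     (\<forall>k S \<alpha> \<beta>. mpp_def p H k S \<longrightarrow> p_congruence p H k S \<alpha> \<longrightarrow> p_congruence p H k S \<beta> \<longrightarrow>
        pcomp p k (pairs k \<alpha>) (pairs k \<beta>) = pcomp p k (pairs k \<beta>) (pairs k \<alpha>))"

definition rectangular :: "nat \<Rightarrow> 'a list set \<Rightarrow> bool" where
  "rectangular n R \<longleftrightarrow>
     (\<forall>I. I \<noteq> {} \<and> I \<subset> {0..<n} \<longrightarrow>
        (\<forall>t1\<in>R. \<forall>t2\<in>R. \<forall>t3\<in>R.
           length t1 = n \<and> length t2 = n \<and> length t3 = n \<and>
           (\<forall>i\<in>I. t1 ! i = t2 ! i) \<and> (\<forall>i\<in>{0..<n} - I. t1 ! i = t3 ! i) \<longrightarrow>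
           map (\<lambda>i. if i \<in> I then t3 ! i else t2 ! i) [0..<n] \<in> R))"

definition strongly_p_rectangular :: "nat \<Rightarrow> (nat \<times> 'a list set) set \<Rightarrow> bool" where
  "strongly_p_rectangular p H \<longleftrightarrow>
     (\<forall>n R. 2 \<le> n \<longrightarrow> mpp_def p H n R \<longrightarrow> rectangular n R)"

end

theory Submission
  imports Defs
begin

text \<open>For a nonempty proper set I of coordinates of a p-mpp-definable relation R, the kernels
  of the projections of R onto I and onto its complement are p-congruences of R: they are
  defined by two variable-disjoint copies of a defining formula of R joined by equalities.
  Given (a,c), (a,d), (b,c) in R, exactly one tuple, namely (a,c), links (b,c) to (a,d)
  through the kernel of the complement followed by the kernel of I, and p does not divide 1.
  By p-permutability the number of tuples linking them the other way round is not divisible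
  by p, hence nonzero, and the only candidate for such a tuple is (b,d).\<close>

lemma upd_Cons: "upd \<sigma> (v # vs) (b # bs) = upd (\<sigma>(v := b)) vs bs"
  by (simp add: upd_def)

lemma upd_append: "length bs = length vs \<Longrightarrow> upd \<sigma> (vs @ ws) (bs @ cs) = upd (upd \<sigma> vs bs) ws cs"
  by (simp add: upd_def)

lemma upd_notin: "w \<notin> set vs \<Longrightarrow> upd \<sigma> vs bs w = \<sigma> w"
proof (induction vs arbitrary: \<sigma> bs)
  case Nil then show ?case by (simp add: upd_def)
next
  case (Cons v vs) then show ?case by (cases bs) (auto simp: upd_Cons upd_def)
qed

lemma upd_agree:
  "\<sigma> w = \<tau> w \<or> w \<in> set vs \<Longrightarrow> length bs = length vs \<Longrightarrow> upd \<sigma> vs bs w = upd \<tau> vs bs w"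
proof (induction vs arbitrary: \<sigma> \<tau> bs)
  case Nil then show ?case by (simp add: upd_def)
next
  case (Cons v vs)
  then obtain b bs' where bs: "bs = b # bs'" by (cases bs) auto
  have "(\<sigma>(v := b)) w = (\<tau>(v := b)) w \<or> w \<in> set vs" using Cons.prems by auto
  with Cons bs show ?case by (simp add: upd_Cons)
qed

lemma upd_nth:
  "distinct vs \<Longrightarrow> length bs = length vs \<Longrightarrow> i < length vs \<Longrightarrow> upd \<sigma> vs bs (vs ! i) = bs ! i"
proof (induction vs arbitrary: \<sigma> bs i)
  case Nil then show ?case by simp
next
  case (Cons v vs)
  then obtain b bs' where "bs = b # bs'" by (cases bs) auto
  with Cons show ?case by (cases i) (simp_all add: upd_Cons upd_notin)
qed

lemma upd_map:
  assumes "inj f" "length bs = length vs"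
  shows "upd \<sigma> (map f vs) bs \<circ> f = upd (\<sigma> \<circ> f) vs bs"
  using assms(2)
proof (induction vs arbitrary: \<sigma> bs)
  case Nil then show ?case by (simp add: upd_def)
next
  case (Cons v vs)
  then obtain b bs' where bs: "bs = b # bs'" "length bs' = length vs" by (cases bs) auto
  have "upd \<sigma> (map f (v # vs)) bs \<circ> f = upd (\<sigma>(f v := b)) (map f vs) bs' \<circ> f"
    by (simp add: bs upd_Cons)
  also have "\<dots> = upd (\<sigma>(f v := b) \<circ> f) vs bs'" by (rule Cons.IH[OF bs(2)])
  also have "\<sigma>(f v := b) \<circ> f = (\<sigma> \<circ> f)(v := b)"
    using assms(1) by (auto simp: fun_eq_iff inj_eq)
  also have "upd ((\<sigma> \<circ> f)(v := b)) vs bs' = upd (\<sigma> \<circ> f) (v # vs) bs"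
    by (simp only: bs upd_Cons)
  finally show ?case .
qed

lemma holds_cong: "(\<forall>w\<in>set (atom_vars at). \<sigma> w = \<tau> w) \<Longrightarrow> holds \<sigma> at = holds \<tau> at"
  by (cases at) (auto intro!: arg_cong[where f = "\<lambda>x. x \<in> _"] map_cong)

lemma sat_cong:
  assumes "\<forall>w\<in>V. \<sigma> w = \<tau> w"
    and "\<forall>at\<in>set \<Phi>. set (atom_vars at) \<subseteq> V \<union> set (concat Ys)"
  shows "sat p \<Phi> Ys \<sigma> = sat p \<Phi> Ys \<tau>"
  using assms
proof (induction Ys arbitrary: \<sigma> \<tau> V)
  case Nil
  then have "holds \<sigma> at = holds \<tau> at" if "at \<in> set \<Phi>" for at
    using that by (intro holds_cong) auto
  then show ?case by simp
next
  case (Cons ys Ys)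
  have "sat p \<Phi> Ys (upd \<sigma> ys b) = sat p \<Phi> Ys (upd \<tau> ys b)" if "length b = length ys" for b
    by (rule Cons.IH[where V = "V \<union> set ys"]) (use Cons.prems that in \<open>auto intro: upd_agree\<close>)
  then show ?case by (simp cong: conj_cong)
qed

lemma not_dvd_card_Collect_conj:
  "(\<And>b. P b = (c \<and> Q b)) \<Longrightarrow>
    (\<not> (p::nat) dvd card {b. L b \<and> P b}) = (c \<and> \<not> p dvd card {b. L b \<and> Q b})"
  by (cases c) auto

lemma sat_append_quantifier_free:
  assumes "\<forall>at\<in>set \<Psi>. set (atom_vars at) \<inter> set (concat Ys) = {}"
  shows "sat p (\<Psi> @ \<Phi>) Ys \<sigma> = ((\<forall>at\<in>set \<Psi>. holds \<sigma> at) \<and> sat p \<Phi> Ys \<sigma>)"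
  using assms
proof (induction Ys arbitrary: \<sigma>)
  case Nil then show ?case by auto
next
  case (Cons ys Ys)
  have "holds (upd \<sigma> ys b) at = holds \<sigma> at" if "at \<in> set \<Psi>" for at b
    using Cons.prems that by (intro holds_cong) (auto intro!: upd_notin)
  moreover have "sat p (\<Psi> @ \<Phi>) Ys (upd \<sigma> ys b)
      = ((\<forall>at\<in>set \<Psi>. holds (upd \<sigma> ys b) at) \<and> sat p \<Phi> Ys (upd \<sigma> ys b))" for b
    using Cons by auto
  ultimately show ?case
    unfolding sat.simps(2) by (intro not_dvd_card_Collect_conj) auto
qed

lemma sat_append_independent:
  assumes "\<forall>at\<in>set \<Phi>2. set (atom_vars at) \<subseteq> W \<union> set (concat Ys2)"
    and "W \<inter> set (concat Ys1) = {}"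
    and "\<forall>at\<in>set \<Phi>1. set (atom_vars at) \<inter> set (concat Ys2) = {}"
  shows "sat p (\<Phi>1 @ \<Phi>2) (Ys1 @ Ys2) \<sigma> = (sat p \<Phi>1 Ys1 \<sigma> \<and> sat p \<Phi>2 Ys2 \<sigma>)"
  using assms
proof (induction Ys1 arbitrary: \<sigma>)
  case Nil then show ?case using sat_append_quantifier_free by simp
next
  case (Cons ys Ys1)
  have "sat p \<Phi>2 Ys2 (upd \<sigma> ys b) = sat p \<Phi>2 Ys2 \<sigma>" for b
    by (rule sat_cong[where V = W]) (use Cons.prems in \<open>auto intro!: upd_notin\<close>)
  moreover have "sat p (\<Phi>1 @ \<Phi>2) (Ys1 @ Ys2) (upd \<sigma> ys b)
      = (sat p \<Phi>1 Ys1 (upd \<sigma> ys b) \<and> sat p \<Phi>2 Ys2 (upd \<sigma> ys b))" for b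
    by (rule Cons.IH) (use Cons.prems in auto)
  ultimately show ?case
    unfolding append_Cons sat.simps(2) by (subst conj_commute, intro not_dvd_card_Collect_conj) auto
qed

fun ren :: "(nat \<Rightarrow> nat) \<Rightarrow> 'a atom \<Rightarrow> 'a atom" where
  "ren f (RelA n R vs) = RelA n R (map f vs)"
| "ren f (EqA u v) = EqA (f u) (f v)"

lemma atom_vars_ren: "atom_vars (ren f at) = map f (atom_vars at)"
  by (cases at) auto

lemma wf_atom_ren: "wf_atom H (ren f at) = wf_atom H at"
  by (cases at) auto

lemma sat_ren: "inj f \<Longrightarrow> sat p (map (ren f) \<Phi>) (map (map f) Ys) \<sigma> = sat p \<Phi> Ys (\<sigma> \<circ> f)"
proof (induction Ys arbitrary: \<sigma>)
  case Nil
  have "holds \<sigma> (ren f at) = holds (\<sigma> \<circ> f) at" for at by (cases at) auto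
  then show ?case by (simp del: comp_apply)
next
  case (Cons ys Ys)
  have "sat p (map (ren f) \<Phi>) (map (map f) Ys) (upd \<sigma> (map f ys) b) = sat p \<Phi> Ys (upd (\<sigma> \<circ> f) ys b)"
    if "length b = length ys" for b
    using Cons.IH[OF Cons.prems] upd_map[OF Cons.prems that] by (simp del: comp_apply)
  then show ?case by (simp del: comp_apply cong: conj_cong)
qed

definition mpp_formula :: "(nat \<times> 'a list set) set \<Rightarrow> nat list \<Rightarrow> nat list list \<Rightarrow> 'a atom list \<Rightarrow> bool"
  where "mpp_formula H xs Ys \<Phi> \<longleftrightarrow> distinct (xs @ concat Ys) \<and>
    (\<forall>at\<in>set \<Phi>. wf_atom H at \<and> set (atom_vars at) \<subseteq> set (xs @ concat Ys))"

definition mpp_rel :: "nat \<Rightarrow> nat list \<Rightarrow> nat list list \<Rightarrow> 'a atom list \<Rightarrow> 'a list set"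
  where "mpp_rel p xs Ys \<Phi> = {a. length a = length xs \<and> sat p \<Phi> Ys (upd (\<lambda>_. undefined) xs a)}"

lemma mpp_def_iff:
  "mpp_def p H k R \<longleftrightarrow> (\<exists>xs Ys \<Phi>. length xs = k \<and> mpp_formula H xs Ys \<Phi> \<and> R = mpp_rel p xs Ys \<Phi>)"
  unfolding mpp_def_def mpp_formula_def mpp_rel_def
  by (intro iff_exI) (rule iffI; elim conjE; simp)

lemma mpp_def_length: "mpp_def p H k R \<Longrightarrow> t \<in> R \<Longrightarrow> length t = k"
  unfolding mpp_def_def by auto

lemma mem_mpp_rel_iff:
  assumes "mpp_formula H xs Ys \<Phi>" "length a = length xs"
  shows "a \<in> mpp_rel p xs Ys \<Phi> \<longleftrightarrow> sat p \<Phi> Ys (upd \<sigma> xs a)"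
proof -
  have "sat p \<Phi> Ys (upd (\<lambda>_. undefined) xs a) = sat p \<Phi> Ys (upd \<sigma> xs a)"
    by (rule sat_cong[where V = "set xs"]) (use assms in \<open>auto simp: mpp_formula_def intro: upd_agree\<close>)
  with assms(2) show ?thesis by (simp add: mpp_rel_def)
qed

lemma mpp_formula_ren:
  assumes "inj f" "mpp_formula H xs Ys \<Phi>"
  shows "mpp_formula H (map f xs) (map (map f) Ys) (map (ren f) \<Phi>)"
proof -
  have vars: "map f xs @ concat (map (map f) Ys) = map f (xs @ concat Ys)"
    by (simp add: map_concat)
  have "distinct (map f (xs @ concat Ys))"
    using assms by (simp add: mpp_formula_def distinct_map inj_on_subset[of f UNIV] del: map_append)
  moreover have "wf_atom H (ren f at) \<and> set (atom_vars (ren f at)) \<subseteq> set (map f (xs @ concat Ys))"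
    if "at \<in> set \<Phi>" for at
  proof -
    have "wf_atom H at" "set (atom_vars at) \<subseteq> set (xs @ concat Ys)"
      using assms(2) that by (auto simp: mpp_formula_def simp del: set_append)
    then show ?thesis by (simp only: wf_atom_ren atom_vars_ren set_map image_mono)
  qed
  ultimately show ?thesis unfolding mpp_formula_def vars by auto
qed

lemma mpp_rel_ren:
  assumes "inj f" "mpp_formula H xs Ys \<Phi>"
  shows "mpp_rel p (map f xs) (map (map f) Ys) (map (ren f) \<Phi>) = mpp_rel p xs Ys \<Phi>"
proof (rule set_eqI)
  fix a
  let ?u = "\<lambda>_::nat. undefined :: 'a"
  show "a \<in> mpp_rel p (map f xs) (map (map f) Ys) (map (ren f) \<Phi>) \<longleftrightarrow> a \<in> mpp_rel p xs Ys \<Phi>"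
  proof (cases "length a = length xs")
    case True
    have "a \<in> mpp_rel p (map f xs) (map (map f) Ys) (map (ren f) \<Phi>)
        \<longleftrightarrow> sat p \<Phi> Ys (upd ?u (map f xs) a \<circ> f)"
      using True by (simp add: mpp_rel_def sat_ren[OF assms(1)] del: comp_apply)
    also have "\<dots> \<longleftrightarrow> a \<in> mpp_rel p xs Ys \<Phi>"
      unfolding upd_map[OF assms(1) True] by (rule mem_mpp_rel_iff[OF assms(2) True, symmetric])
    finally show ?thesis .
  qed (simp add: mpp_rel_def)
qed

lemma mpp_formula_append:
  assumes "mpp_formula H xs Ys \<Phi>" "mpp_formula H xs' Ys' \<Phi>'"
    and "set (xs @ concat Ys) \<inter> set (xs' @ concat Ys') = {}"
  shows "mpp_formula H (xs @ xs') (Ys @ Ys') (\<Phi> @ \<Phi>')"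
  using assms unfolding mpp_formula_def by auto

lemma mpp_rel_append:
  assumes R: "mpp_formula H xs Ys \<Phi>" and S: "mpp_formula H xs' Ys' \<Phi>'"
    and disj: "set (xs @ concat Ys) \<inter> set (xs' @ concat Ys') = {}"
  shows "mpp_rel p (xs @ xs') (Ys @ Ys') (\<Phi> @ \<Phi>')
    = {a @ b | a b. a \<in> mpp_rel p xs Ys \<Phi> \<and> b \<in> mpp_rel p xs' Ys' \<Phi>'}"
proof -
  have key: "a @ b \<in> mpp_rel p (xs @ xs') (Ys @ Ys') (\<Phi> @ \<Phi>')
      \<longleftrightarrow> a \<in> mpp_rel p xs Ys \<Phi> \<and> b \<in> mpp_rel p xs' Ys' \<Phi>'"
    if a: "length a = length xs" and b: "length b = length xs'" for a b
  proof -
    define \<sigma> where "\<sigma> = upd (upd (\<lambda>_. undefined) xs a) xs' b"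
    have "a @ b \<in> mpp_rel p (xs @ xs') (Ys @ Ys') (\<Phi> @ \<Phi>') \<longleftrightarrow> sat p (\<Phi> @ \<Phi>') (Ys @ Ys') \<sigma>"
      unfolding \<sigma>_def upd_append[OF a, symmetric]
      by (rule mem_mpp_rel_iff[OF mpp_formula_append[OF R S disj]]) (simp add: a b)
    also have "\<dots> \<longleftrightarrow> sat p \<Phi> Ys \<sigma> \<and> sat p \<Phi>' Ys' \<sigma>"
      by (rule sat_append_independent[where W = "set xs'"])
        (use R S disj in \<open>fastforce simp: mpp_formula_def\<close>)+
    also have "sat p \<Phi> Ys \<sigma> \<longleftrightarrow> sat p \<Phi> Ys (upd (\<lambda>_. undefined) xs a)"
      by (rule sat_cong[where V = "set xs"])
        (use R disj in \<open>auto simp: \<sigma>_def mpp_formula_def intro!: upd_notin\<close>)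
    finally show ?thesis
      using mem_mpp_rel_iff[OF R a] mem_mpp_rel_iff[OF S b] by (simp add: \<sigma>_def)
  qed
  show ?thesis
  proof (intro set_eqI iffI)
    fix c assume c: "c \<in> mpp_rel p (xs @ xs') (Ys @ Ys') (\<Phi> @ \<Phi>')"
    define a b where "a = take (length xs) c" and "b = drop (length xs) c"
    have "length c = length xs + length xs'" using c by (simp add: mpp_rel_def)
    then have "length a = length xs" "length b = length xs'" "c = a @ b"
      by (simp_all add: a_def b_def)
    with c key show "c \<in> {a @ b | a b. a \<in> mpp_rel p xs Ys \<Phi> \<and> b \<in> mpp_rel p xs' Ys' \<Phi>'}"
      by blast
  next
    fix c assume "c \<in> {a @ b | a b. a \<in> mpp_rel p xs Ys \<Phi> \<and> b \<in> mpp_rel p xs' Ys' \<Phi>'}"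
    then show "c \<in> mpp_rel p (xs @ xs') (Ys @ Ys') (\<Phi> @ \<Phi>')"
      using key by (auto simp: mpp_rel_def)
  qed
qed

text \<open>The variables of the second formula are shifted beyond those of the first.\<close>
lemma mpp_def_append:
  assumes "mpp_def p H n R" "mpp_def p H m S"
  shows "mpp_def p H (n + m) {a @ b | a b. a \<in> R \<and> b \<in> S}"
proof -
  obtain xs Ys \<Phi> where xs: "length xs = n" and R: "mpp_formula H xs Ys \<Phi>" "R = mpp_rel p xs Ys \<Phi>"
    using assms(1) by (auto simp: mpp_def_iff)
  obtain xs' Ys' \<Phi>' where xs': "length xs' = m" and S: "mpp_formula H xs' Ys' \<Phi>'" "S = mpp_rel p xs' Ys' \<Phi>'"
    using assms(2) by (auto simp: mpp_def_iff)
  define N where "N = Suc (Max (set (xs @ concat Ys)))"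
  define f where "f = (\<lambda>v. v + N)"
  have inj: "inj f" by (simp add: f_def inj_def)
  have lt: "v < N" if "v \<in> set (xs @ concat Ys)" for v
    using that unfolding N_def by (simp add: le_imp_less_Suc del: set_append)
  have ge: "set (map f xs' @ concat (map (map f) Ys')) \<subseteq> {N..}"
    by (auto simp: f_def)
  have disj: "set (xs @ concat Ys) \<inter> set (map f xs' @ concat (map (map f) Ys')) = {}"
    using lt ge by (meson disjoint_iff atLeast_iff subsetD leD)
  have "mpp_formula H (map f xs') (map (map f) Ys') (map (ren f) \<Phi>')"
    by (rule mpp_formula_ren[OF inj S(1)])
  with R S xs xs' disj show ?thesis
    unfolding mpp_def_iff
    by (intro exI[of _ "xs @ map f xs'"] exI[of _ "Ys @ map (map f) Ys'"] exI[of _ "\<Phi> @ map (ren f) \<Phi>'"])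
      (simp add: mpp_formula_append mpp_rel_append mpp_rel_ren[OF inj S(1)] del: set_append)
qed

lemma mpp_def_equate_coordinates:
  assumes "mpp_def p H n R" and P: "\<forall>(i, j)\<in>set P. i < n \<and> j < n"
  shows "mpp_def p H n {t \<in> R. \<forall>(i, j)\<in>set P. t ! i = t ! j}"
proof -
  obtain xs Ys \<Phi> where xs: "length xs = n" and R: "mpp_formula H xs Ys \<Phi>" "R = mpp_rel p xs Ys \<Phi>"
    using assms(1) by (auto simp: mpp_def_iff)
  define E :: "'a atom list" where "E = map (\<lambda>(i, j). EqA (xs ! i) (xs ! j)) P"
  have vars_E: "\<forall>at\<in>set E. set (atom_vars at) \<subseteq> set xs"
    using P xs by (fastforce simp: E_def)
  have RE: "mpp_formula H xs Ys (E @ \<Phi>)"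
    using R(1) vars_E by (auto simp: mpp_formula_def E_def)
  have "a \<in> mpp_rel p xs Ys (E @ \<Phi>) \<longleftrightarrow> a \<in> R \<and> (\<forall>(i, j)\<in>set P. a ! i = a ! j)"
    if a: "length a = length xs" for a
  proof -
    let ?\<sigma> = "upd (\<lambda>_. undefined) xs a"
    have val: "?\<sigma> (xs ! i) = a ! i" if "i < n" for i
      using R(1) a xs that by (simp add: mpp_formula_def upd_nth)
    have holds_E: "(\<forall>at\<in>set E. holds ?\<sigma> at) \<longleftrightarrow> (\<forall>(i, j)\<in>set P. a ! i = a ! j)"
      using P unfolding E_def by (force simp: val)
    have "a \<in> mpp_rel p xs Ys (E @ \<Phi>) \<longleftrightarrow> sat p (E @ \<Phi>) Ys ?\<sigma>"
      by (rule mem_mpp_rel_iff[OF RE a])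
    also have "\<dots> \<longleftrightarrow> (\<forall>at\<in>set E. holds ?\<sigma> at) \<and> sat p \<Phi> Ys ?\<sigma>"
      by (rule sat_append_quantifier_free) (use vars_E R(1) in \<open>auto simp: mpp_formula_def\<close>)
    finally show ?thesis
      using holds_E mem_mpp_rel_iff[OF R(1) a] R(2) by blast
  qed
  then have "{t \<in> R. \<forall>(i, j)\<in>set P. t ! i = t ! j} = mpp_rel p xs Ys (E @ \<Phi>)"
    using R(2) by (auto simp: mpp_rel_def)
  with xs RE show ?thesis by (auto simp: mpp_def_iff)
qed

definition proj_kernel :: "'a list set \<Rightarrow> nat set \<Rightarrow> ('a list \<times> 'a list) set" where
  "proj_kernel R I = {(t, t'). t \<in> R \<and> t' \<in> R \<and> (\<forall>i\<in>I. t ! i = t' ! i)}"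

lemma equiv_proj_kernel: "equiv R (proj_kernel R I)"
  unfolding proj_kernel_def equiv_def refl_on_def sym_def trans_def by auto

lemma p_congruence_proj_kernel:
  assumes R: "mpp_def p H n R" and I: "I \<subseteq> {0..<n}"
  obtains \<alpha> where "p_congruence p H n R \<alpha>" "pairs n \<alpha> = proj_kernel R I"
proof -
  define P where "P = map (\<lambda>i. (i, n + i)) (filter (\<lambda>i. i \<in> I) [0..<n])"
  define \<alpha> where "\<alpha> = {s \<in> {a @ b | a b. a \<in> R \<and> b \<in> R}. \<forall>(i, j)\<in>set P. s ! i = s ! j}"
  have "a @ b \<in> \<alpha> \<longleftrightarrow> (a, b) \<in> proj_kernel R I" if a: "length a = n" and b: "length b = n" for a b
  proof -
    have "a @ b \<in> {a @ b | a b. a \<in> R \<and> b \<in> R} \<longleftrightarrow> a \<in> R \<and> b \<in> R"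
    proof
      assume "a @ b \<in> {a @ b | a b. a \<in> R \<and> b \<in> R}"
      then obtain a' b' where "a @ b = a' @ b'" "a' \<in> R" "b' \<in> R" by blast
      with a mpp_def_length[OF R] show "a \<in> R \<and> b \<in> R" by (metis append_eq_append_conv)
    qed blast
    moreover have "(\<forall>(i, j)\<in>set P. (a @ b) ! i = (a @ b) ! j) \<longleftrightarrow> (\<forall>i\<in>I. a ! i = b ! i)"
      using a I by (auto simp: P_def nth_append)
    ultimately show ?thesis by (simp add: \<alpha>_def proj_kernel_def)
  qed
  moreover have "(a, b) \<in> proj_kernel R I \<Longrightarrow> length a = n \<and> length b = n" for a b
    using mpp_def_length[OF R] by (simp add: proj_kernel_def)
  ultimately have pairs: "pairs n \<alpha> = proj_kernel R I"
    unfolding pairs_def by blast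
  have "mpp_def p H (n + n) \<alpha>"
    unfolding \<alpha>_def by (rule mpp_def_equate_coordinates[OF mpp_def_append[OF R R]]) (auto simp: P_def)
  then have "p_congruence p H n R \<alpha>"
    by (simp add: p_congruence_def mult_2 pairs equiv_proj_kernel)
  then show thesis using pairs by (rule that)
qed

lemma rectangle_closed_if_proj_kernels_permute:
  fixes R :: "'a list set"
  assumes p: "p \<noteq> 1" and len: "\<forall>t\<in>R. length t = n"
    and perm: "pcomp p n (proj_kernel R I) (proj_kernel R ({0..<n} - I))
      = pcomp p n (proj_kernel R ({0..<n} - I)) (proj_kernel R I)"
    and t: "t1 \<in> R" "t2 \<in> R" "t3 \<in> R"
    and t12: "\<forall>i\<in>I. t1 ! i = t2 ! i" and t13: "\<forall>i\<in>{0..<n} - I. t1 ! i = t3 ! i"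
  shows "map (\<lambda>i. if i \<in> I then t3 ! i else t2 ! i) [0..<n] \<in> R"
proof -
  have "c = t1" if c: "length c = n" "(t3, c) \<in> proj_kernel R ({0..<n} - I)" "(c, t2) \<in> proj_kernel R I"
    for c
  proof (rule nth_equalityI)
    show "length c = length t1" using c t len by simp
    show "c ! i = t1 ! i" if "i < length c" for i
      using c that t12 t13 by (cases "i \<in> I") (auto simp: proj_kernel_def)
  qed
  then have "{c. length c = n \<and> (t3, c) \<in> proj_kernel R ({0..<n} - I) \<and> (c, t2) \<in> proj_kernel R I} = {t1}"
    using t t12 t13 len by (auto simp: proj_kernel_def)
  then have "(t3, t2) \<in> pcomp p n (proj_kernel R ({0..<n} - I)) (proj_kernel R I)"
    using p t len by (simp add: pcomp_def)
  then have "(t3, t2) \<in> pcomp p n (proj_kernel R I) (proj_kernel R ({0..<n} - I))"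
    by (simp add: perm)
  then have "\<not> p dvd card {c. length c = n \<and> (t3, c) \<in> proj_kernel R I \<and> (c, t2) \<in> proj_kernel R ({0..<n} - I)}"
    by (simp add: pcomp_def)
  then have "{c. length c = n \<and> (t3, c) \<in> proj_kernel R I \<and> (c, t2) \<in> proj_kernel R ({0..<n} - I)} \<noteq> {}"
    by (intro notI) simp
  then obtain c where c: "length c = n" "(t3, c) \<in> proj_kernel R I" "(c, t2) \<in> proj_kernel R ({0..<n} - I)"
    by blast
  have "c = map (\<lambda>i. if i \<in> I then t3 ! i else t2 ! i) [0..<n]"
    using c by (intro nth_equalityI) (auto simp: proj_kernel_def)
  with c show ?thesis by (simp add: proj_kernel_def)
qed

theorem lemma6p4:
  fixes p :: nat and H :: "(nat \<times> ('a::finite) list set) set"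
  assumes "prime p"
    and "finite H"
    and "\<forall>(n, R)\<in>H. \<forall>t\<in>R. length t = n"
    and "cong_p_permutable p H"
  shows "strongly_p_rectangular p H"
  unfolding strongly_p_rectangular_def rectangular_def
proof (intro allI impI ballI, elim conjE)
  fix n R I t1 t2 t3
  assume R: "mpp_def p H n R" and I: "I \<subset> {0..<n}"
    and t: "t1 \<in> R" "t2 \<in> R" "t3 \<in> R" "\<forall>i\<in>I. t1 ! i = t2 ! i" "\<forall>i\<in>{0..<n} - I. t1 ! i = t3 ! i"
  obtain \<alpha> where \<alpha>: "p_congruence p H n R \<alpha>" "pairs n \<alpha> = proj_kernel R I"
    using p_congruence_proj_kernel[OF R psubset_imp_subset[OF I]] by blast
  obtain \<beta> where \<beta>: "p_congruence p H n R \<beta>" "pairs n \<beta> = proj_kernel R ({0..<n} - I)"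
    using p_congruence_proj_kernel[OF R Diff_subset] by blast
  have "pcomp p n (pairs n \<alpha>) (pairs n \<beta>) = pcomp p n (pairs n \<beta>) (pairs n \<alpha>)"
    using assms(4) R \<alpha>(1) \<beta>(1) unfolding cong_p_permutable_def by blast
  moreover have "p \<noteq> 1" using \<open>prime p\<close> by auto
  ultimately show "map (\<lambda>i. if i \<in> I then t3 ! i else t2 ! i) [0..<n] \<in> R"
    using mpp_def_length[OF R] t unfolding \<alpha>(2) \<beta>(2)
    by (intro rectangle_closed_if_proj_kernels_permute) auto
qed

end
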